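(* Let $n\ge 1$ and let $\delta, s$ be nonnegative integers with $s \le s_{\mathrm{lim}} := n-\delta-1$. Let $A \in \mathbb{R}^{n\times n}$ be symmetric, and suppose there is a permutation matrix $\Pi\in\mathcal{P}_n$ such that $\Pi A \Pi^T \in \mathcal{M}_n(\delta,s)$. Then: (i) $\Pi$, together with some $S\in\mathcal{R}^n$, is an optimal solution of the Robust Seriation problem with the entrywise $\ell_1$ norm, $$\min_{\Pi'\in\mathcal{P}_n,\; S\in\mathcal{R}^n} \; \sum_{i,j=1}^n \big|S_{ij} - (\Pi' A \Pi'^T)_{ij}\big|;$$ (ii) the ordering given by $\Pi$ is an optimal solution of the problem R2SUM($\lambda$) with $\lambda=\delta^2$, $$\min_{x\in\mathcal{P}_n} \; \sum_{i,j=1}^n A_{ij}\,\min\big(\lambda,\; |x_i-x_j|^2\big),$$ where the ordering given by $\Pi$ is the permutation vector $x$ with $x_{\pi(k)}=k$ for all $k$ (element $\pi(k)$ is placed at position $k$), $\pi$ being the permutation with $\Pi_{ij}=1$ iff $\pi(i)=j$.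
   Context: $\mathcal{P}_n$ denotes the set of permutations of $\{1,\dots,n\}$, represented either as permutation vectors $x\in\mathbb{R}^n$ (a rearrangement of $(1,\dots,n)$) or as permutation matrices $\Pi\in\{0,1\}^{n\times n}$ with $\Pi_{ij}=1$ iff $\pi(i)=j$; then $(\Pi A\Pi^T)_{ij}=A_{\pi(i)\pi(j)}$. A matrix $S\in\mathbb{R}^{n\times n}$ is a strong-R-matrix (strong Robinson matrix) if it is symmetric and $S_{ij}\le S_{kl}$ for all $(i,j,k,l)$ with $|i-j|\ge|k-l|$; $\mathcal{R}^n$ denotes the set of such matrices. $\mathcal{M}_n(\delta,s)$ is the set of symmetric matrices $M\in\{0,1\}^{n\times n}$ such that $M_{ij}=1$ for all $(i,j)$ with $|i-j|\le\delta$ and the number of nonzero entries of $M$ equals $\big(n+(2n-1)\delta-\delta^2\big)+s$ (i.e. a full band of half-width $\delta$ plus $s$ additional out-of-band ones). *)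

theory Defs
  imports Complex_Main "HOL-Combinatorics.Permutations"
begin

text \<open>Matrices are functions nat \<Rightarrow> nat \<Rightarrow> real, only the entries with indices in {1..n} matter.
  A permutation matrix \<Pi> is represented by the permutation \<pi> of {1..n} with \<Pi>_ij = 1 iff \<pi> i = j,
  so that (\<Pi> A \<Pi>^T)_ij = A (\<pi> i) (\<pi> j).\<close>

definition perm_conj :: "(nat \<Rightarrow> nat) \<Rightarrow> (nat \<Rightarrow> nat \<Rightarrow> real) \<Rightarrow> (nat \<Rightarrow> nat \<Rightarrow> real)" where
  "perm_conj \<pi> A = (\<lambda>i j. A (\<pi> i) (\<pi> j))"

definition symmetric_mat :: "nat \<Rightarrow> (nat \<Rightarrow> nat \<Rightarrow> real) \<Rightarrow> bool" where
  "symmetric_mat n A \<longleftrightarrow> (\<forall>i\<in>{1..n}. \<forall>j\<in>{1..n}. A i j = A j i)"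

definition strong_R :: "nat \<Rightarrow> (nat \<Rightarrow> nat \<Rightarrow> real) \<Rightarrow> bool" where
  "strong_R n S \<longleftrightarrow> symmetric_mat n S \<and>
     (\<forall>i\<in>{1..n}. \<forall>j\<in>{1..n}. \<forall>k\<in>{1..n}. \<forall>l\<in>{1..n}.
        \<bar>int i - int j\<bar> \<ge> \<bar>int k - int l\<bar> \<longrightarrow> S i j \<le> S k l)"

definition M_set :: "nat \<Rightarrow> nat \<Rightarrow> nat \<Rightarrow> (nat \<Rightarrow> nat \<Rightarrow> real) set" where
  "M_set n \<delta> s = {M. symmetric_mat n M \<and>
     (\<forall>i\<in>{1..n}. \<forall>j\<in>{1..n}. M i j \<in> {0, 1}) \<and>
     (\<forall>i\<in>{1..n}. \<forall>j\<in>{1..n}. \<bar>int i - int j\<bar> \<le> int \<delta> \<longrightarrow> M i j = 1) \<and>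
     int (card {(i, j). i \<in> {1..n} \<and> j \<in> {1..n} \<and> M i j \<noteq> 0})
        = (int n + (2 * int n - 1) * int \<delta> - int \<delta> ^ 2) + int s}"

definition l1_dist :: "nat \<Rightarrow> (nat \<Rightarrow> nat \<Rightarrow> real) \<Rightarrow> (nat \<Rightarrow> nat \<Rightarrow> real) \<Rightarrow> real" where
  "l1_dist n S B = (\<Sum>i=1..n. \<Sum>j=1..n. \<bar>S i j - B i j\<bar>)"

text \<open>R2SUM(\<lambda>) objective for a permutation vector x (x i = position of element i)\<close>
definition r2sum :: "nat \<Rightarrow> real \<Rightarrow> (nat \<Rightarrow> nat \<Rightarrow> real) \<Rightarrow> (nat \<Rightarrow> nat) \<Rightarrow> real" where
  "r2sum n lam A x = (\<Sum>i=1..n. \<Sum>j=1..n. A i j * min lam ((real (x i) - real (x j))^2))"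

end

theory Submission
  imports Defs
begin

text \<open>Let B be the conjugated matrix: a 0/1 matrix whose support is the band |i - j| \<le> \<delta>
  together with s further entries.

  (i) The indicator of the band is a strong-R-matrix at l1 distance s from B. Conversely, let C be
  any reordering of B and S any strong-R-matrix, put b = S 1 (\<delta> + 2) and let t be b clamped to
  [0, 1]. Entries of S at distance at most \<delta> + 1 from the diagonal are \<ge> b and entries at
  distance at least \<delta> + 1 are \<le> b, so each zero of C at distance at most \<delta> + 1 costs at least t
  and each one of C outside the band costs at least 1 - t. There are at least s ones of C outside
  the band, and at least s zeros at distance at most \<delta> + 1 because the layer at distance \<delta> + 1
  has 2 (n - \<delta> - 1) \<ge> 2 s entries.

  (ii) For a placement y the R2SUM objective is the sum of min(\<delta>^2, (i - j)^2) over the image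
  of the support of A under y. This set has as many elements as the band plus s, and the summand
  is at most \<delta>^2 on the band and exactly \<delta>^2 off it, so the sum is minimal when the set contains
  the band; for the ordering x the image is the support of B.\<close>

definition band :: "nat \<Rightarrow> nat \<Rightarrow> (nat \<times> nat) set" where
  "band n d = {(i, j). i \<in> {1..n} \<and> j \<in> {1..n} \<and> \<bar>int i - int j\<bar> \<le> int d}"

definition nonzeros :: "nat \<Rightarrow> (nat \<Rightarrow> nat \<Rightarrow> real) \<Rightarrow> (nat \<times> nat) set" where
  "nonzeros n C = {(i, j). i \<in> {1..n} \<and> j \<in> {1..n} \<and> C i j \<noteq> 0}"

definition zero_one_mat :: "nat \<Rightarrow> (nat \<Rightarrow> nat \<Rightarrow> real) \<Rightarrow> bool" where
  "zero_one_mat n C \<longleftrightarrow> (\<forall>i\<in>{1..n}. \<forall>j\<in>{1..n}. C i j \<in> {0, 1})"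

lemma band_subset: "band n d \<subseteq> {1..n} \<times> {1..n}"
  by (auto simp: band_def)

lemma nonzeros_subset: "nonzeros n C \<subseteq> {1..n} \<times> {1..n}"
  by (auto simp: nonzeros_def)

lemma finite_band [simp]: "finite (band n d)"
  by (rule finite_subset[OF band_subset]) auto

lemma finite_nonzeros [simp]: "finite (nonzeros n C)"
  by (rule finite_subset[OF nonzeros_subset]) auto

lemma card_band:
  assumes "d \<le> n"
  shows "int (card (band n d)) = int n + (2 * int n - 1) * int d - int d ^ 2"
  using assms
proof (induction n rule: nat_induct_at_least)
  case base
  have "band d d = {1..d} \<times> {1..d}"
    by (auto simp: band_def)
  then show ?case
    by (simp add: power2_eq_square algebra_simps)
next
  case (Suc n)
  define row where "row = {Suc n} \<times> {Suc n - d..Suc n}"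
  define col where "col = {Suc n - d..n} \<times> {Suc n}"
  have "band (Suc n) d = band n d \<union> row \<union> col"
    using Suc.hyps by (auto simp: band_def row_def col_def)
  moreover have "band n d \<inter> row = {}" "(band n d \<union> row) \<inter> col = {}"
    by (auto simp: band_def row_def col_def)
  ultimately have "card (band (Suc n) d) = card (band n d) + card row + card col"
    by (simp add: card_Un_disjoint row_def col_def)
  also have "\<dots> = card (band n d) + (d + 1) + d"
    using Suc.hyps by (simp add: row_def col_def)
  finally show ?case
    using Suc.IH by (simp add: algebra_simps power2_eq_square)
qed

lemma card_band_Suc:
  assumes "Suc d \<le> n"
  shows "card (band n (Suc d)) = card (band n d) + 2 * (n - Suc d)"
proof -
  have "int (card (band n (Suc d))) = int (card (band n d)) + 2 * (int n - int (Suc d))"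
    using card_band[OF assms] card_band[of d n] assms by (simp add: power2_eq_square algebra_simps)
  then show ?thesis
    using assms by (simp add: of_nat_diff)
qed

lemma card_Diff_eq_card_Diff_add:
  assumes "finite X" "finite Y" "card X = card Y + s"
  shows "card (X - Y) = card (Y - X) + s"
  using card_Int_Diff[OF assms(1), of Y] card_Int_Diff[OF assms(2), of X] assms(3)
  by (simp add: Int_commute)

lemma perm_conj_perm_conj: "perm_conj \<sigma> (perm_conj \<tau> A) = perm_conj (\<tau> \<circ> \<sigma>) A"
  by (simp add: perm_conj_def)

lemma perm_conj_inv_perm_conj:
  assumes "\<sigma> permutes S"
  shows "perm_conj (inv \<sigma>) (perm_conj \<sigma> A) = A"
  by (simp add: perm_conj_perm_conj permutes_inv_o[OF assms]) (simp add: perm_conj_def)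

lemma zero_one_mat_perm_conj:
  assumes "\<sigma> permutes {1..n}" "zero_one_mat n A"
  shows "zero_one_mat n (perm_conj \<sigma> A)"
  using assms(2) permutes_in_image[OF assms(1)] unfolding zero_one_mat_def perm_conj_def by blast

lemma nonzeros_perm_conj:
  assumes "\<sigma> permutes {1..n}"
  shows "map_prod \<sigma> \<sigma> ` nonzeros n (perm_conj \<sigma> A) = nonzeros n A"
proof
  show "map_prod \<sigma> \<sigma> ` nonzeros n (perm_conj \<sigma> A) \<subseteq> nonzeros n A"
    using permutes_in_image[OF assms] by (auto simp only: nonzeros_def perm_conj_def)
  show "nonzeros n A \<subseteq> map_prod \<sigma> \<sigma> ` nonzeros n (perm_conj \<sigma> A)"
  proof
    fix e assume e: "e \<in> nonzeros n A"
    obtain i j where ij: "e = (i, j)"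
      by force
    have "i \<in> {1..n}" "j \<in> {1..n}" "A i j \<noteq> 0"
      using e ij by (auto simp: nonzeros_def)
    then have "(inv \<sigma> i, inv \<sigma> j) \<in> nonzeros n (perm_conj \<sigma> A)"
      using permutes_in_image[OF permutes_inv[OF assms]]
      unfolding nonzeros_def perm_conj_def
      by (simp only: mem_Collect_eq case_prod_conv permutes_inverses(1)[OF assms] simp_thms)
    moreover have "e = map_prod \<sigma> \<sigma> (inv \<sigma> i, inv \<sigma> j)"
      by (simp add: ij permutes_inverses[OF assms])
    ultimately show "e \<in> map_prod \<sigma> \<sigma> ` nonzeros n (perm_conj \<sigma> A)"
      by blast
  qed
qed

lemma inj_on_map_prod_square:
  assumes "inj_on y {1..n}"
  shows "inj_on (map_prod y y) (nonzeros n A)"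
  using map_prod_inj_on[OF assms assms] nonzeros_subset by (rule inj_on_subset)

lemma card_nonzeros_perm_conj:
  assumes "\<sigma> permutes {1..n}"
  shows "card (nonzeros n (perm_conj \<sigma> A)) = card (nonzeros n A)"
  using card_image[OF inj_on_map_prod_square[OF permutes_inj_on[OF assms]]] nonzeros_perm_conj[OF assms]
  by metis

lemma M_setD:
  assumes "M \<in> M_set n d s" "d \<le> n"
  shows "zero_one_mat n M" "band n d \<subseteq> nonzeros n M"
    and "card (nonzeros n M) = card (band n d) + s"
proof -
  show "zero_one_mat n M" "band n d \<subseteq> nonzeros n M"
    using assms(1) by (auto simp: M_set_def zero_one_mat_def band_def nonzeros_def)
  have "int (card (nonzeros n M)) = int (card (band n d)) + int s"
    using assms(1) card_band[OF assms(2)] by (simp add: M_set_def nonzeros_def)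
  then show "card (nonzeros n M) = card (band n d) + s"
    by linarith
qed

lemma strong_R_band_indicator: "strong_R n (\<lambda>i j. of_bool (\<bar>int i - int j\<bar> \<le> int d))"
  by (auto simp: strong_R_def symmetric_mat_def abs_minus_commute)

lemma l1_dist_pairs: "l1_dist n S C = (\<Sum>(i, j)\<in>{1..n} \<times> {1..n}. \<bar>S i j - C i j\<bar>)"
  by (simp add: l1_dist_def sum.cartesian_product)

lemma l1_dist_band_indicator:
  assumes "zero_one_mat n B" "band n d \<subseteq> nonzeros n B"
  shows "l1_dist n (\<lambda>i j. of_bool (\<bar>int i - int j\<bar> \<le> int d)) B = card (nonzeros n B - band n d)"
proof -
  have "l1_dist n (\<lambda>i j. of_bool (\<bar>int i - int j\<bar> \<le> int d)) B
      = (\<Sum>e\<in>{1..n} \<times> {1..n}. of_bool (e \<in> nonzeros n B - band n d))"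
    unfolding l1_dist_pairs
  proof (rule sum.cong)
    fix e assume "e \<in> {1..n} \<times> {1..n}"
    with assms show "(case e of (i, j) \<Rightarrow> \<bar>of_bool (\<bar>int i - int j\<bar> \<le> int d) - B i j\<bar>)
        = of_bool (e \<in> nonzeros n B - band n d)"
      by (fastforce simp: zero_one_mat_def nonzeros_def band_def)
  qed simp
  also have "\<dots> = card (nonzeros n B - band n d)"
  proof -
    have "{1..n} \<times> {1..n} \<inter> {e. e \<in> nonzeros n B - band n d} = nonzeros n B - band n d"
      using nonzeros_subset by blast
    then show ?thesis
      by simp
  qed
  finally show ?thesis .
qed

lemma strong_R_ge_corner:
  assumes "strong_R n S" "d + 2 \<le> n" "(i, j) \<in> band n (Suc d)"
  shows "S 1 (d + 2) \<le> S i j"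
  using assms unfolding strong_R_def band_def by (auto elim!: ballE[where x = 1] ballE[where x = "d + 2"])

lemma strong_R_le_corner:
  assumes "strong_R n S" "d + 2 \<le> n" "i \<in> {1..n}" "j \<in> {1..n}" "(i, j) \<notin> band n d"
  shows "S i j \<le> S 1 (d + 2)"
  using assms unfolding strong_R_def band_def by (auto elim!: ballE[where x = 1] ballE[where x = "d + 2"])

lemma clamp_unit_le_abs:
  fixes b x :: real
  shows "b \<le> x \<Longrightarrow> max 0 (min 1 b) \<le> \<bar>x\<bar>"
    and "x \<le> b \<Longrightarrow> 1 - max 0 (min 1 b) \<le> \<bar>x - 1\<bar>"
  by auto

lemma l1_dist_strong_R_ge:
  assumes S: "strong_R n S" and C: "zero_one_mat n C"
    and card_C: "card (nonzeros n C) = card (band n d) + s" and "s + d + 1 \<le> n"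
  shows "real s \<le> l1_dist n S C"
proof (cases "s = 0")
  case True
  then show ?thesis
    by (simp add: l1_dist_def sum_nonneg)
next
  case False
  then have n: "d + 2 \<le> n"
    using assms(4) by linarith
  define t where "t = max 0 (min 1 (S 1 (d + 2)))"
  define near_zeros where "near_zeros = band n (Suc d) - nonzeros n C"
  define far_ones where "far_ones = nonzeros n C - band n d"
  let ?cost = "\<lambda>(i, j). \<bar>S i j - C i j\<bar>"
  have "card (band n (Suc d)) - card (nonzeros n C) \<le> card near_zeros"
    unfolding near_zeros_def by (rule diff_card_le_card_Diff) simp
  then have card_near_zeros: "s \<le> card near_zeros"
    using card_band_Suc[of d n] card_C n assms(4) by linarith
  have card_far_ones: "s \<le> card far_ones"
    using card_Diff_eq_card_Diff_add[OF _ _ card_C] by (simp add: far_ones_def)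
  have "real s \<le> t * card near_zeros + (1 - t) * card far_ones"
  proof -
    have "t * s \<le> t * card near_zeros" "(1 - t) * s \<le> (1 - t) * card far_ones"
      using card_near_zeros card_far_ones by (auto intro!: mult_left_mono simp: t_def)
    then show ?thesis
      by (simp add: algebra_simps)
  qed
  also have "t * card near_zeros \<le> sum ?cost near_zeros"
  proof -
    have "t \<le> ?cost e" if "e \<in> near_zeros" for e
    proof -
      obtain i j where e: "e = (i, j)"
        by force
      have near: "(i, j) \<in> band n (Suc d)" and "C i j = 0"
        using that by (auto simp: e near_zeros_def nonzeros_def band_def)
      then show ?thesis
        using strong_R_ge_corner[OF S n near] clamp_unit_le_abs(1) by (simp add: e t_def)
    qed
    then show ?thesis
      using sum_bounded_below[of near_zeros t ?cost] by (simp add: mult.commute)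
  qed
  also have "(1 - t) * card far_ones \<le> sum ?cost far_ones"
  proof -
    have "1 - t \<le> ?cost e" if "e \<in> far_ones" for e
    proof -
      obtain i j where e: "e = (i, j)"
        by force
      have ij: "i \<in> {1..n}" "j \<in> {1..n}" and far: "(i, j) \<notin> band n d" and "C i j \<noteq> 0"
        using that by (auto simp: e far_ones_def nonzeros_def)
      then have "C i j = 1"
        using C unfolding zero_one_mat_def by blast
      then show ?thesis
        using strong_R_le_corner[OF S n ij far] clamp_unit_le_abs(2) by (simp add: e t_def)
    qed
    then show ?thesis
      using sum_bounded_below[of far_ones "1 - t" ?cost] by (simp add: mult.commute)
  qed
  also have "sum ?cost near_zeros + sum ?cost far_ones = sum ?cost (near_zeros \<union> far_ones)"
    by (rule sum.union_disjoint[symmetric]) (auto simp: near_zeros_def far_ones_def)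
  also have "\<dots> \<le> sum ?cost ({1..n} \<times> {1..n})"
  proof (rule sum_mono2)
    show "near_zeros \<union> far_ones \<subseteq> {1..n} \<times> {1..n}"
      using band_subset[of n "Suc d"] nonzeros_subset[of n C]
      unfolding near_zeros_def far_ones_def by blast
  qed auto
  finally show ?thesis
    by (simp add: l1_dist_pairs)
qed

definition trunc_sq_dist :: "real \<Rightarrow> nat \<times> nat \<Rightarrow> real" where
  "trunc_sq_dist lam = (\<lambda>(i, j). min lam ((real i - real j)^2))"

lemma r2sum_eq_sum_image:
  assumes y: "inj_on y {1..n}" and A: "zero_one_mat n A"
  shows "r2sum n lam A y = sum (trunc_sq_dist lam) (map_prod y y ` nonzeros n A)"
proof -
  let ?h = "\<lambda>e. trunc_sq_dist lam (map_prod y y e)"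
  have "r2sum n lam A y = (\<Sum>(i, j)\<in>{1..n} \<times> {1..n}. A i j * ?h (i, j))"
    by (simp add: r2sum_def trunc_sq_dist_def sum.cartesian_product)
  also have "\<dots> = (\<Sum>(i, j)\<in>nonzeros n A. A i j * ?h (i, j))"
    by (rule sum.mono_neutral_right) (auto simp: nonzeros_def)
  also have "\<dots> = sum ?h (nonzeros n A)"
  proof (rule sum.cong)
    fix e assume "e \<in> nonzeros n A"
    moreover obtain i j where "e = (i, j)"
      by force
    ultimately have "A i j = 1" and e: "e = (i, j)"
      using A unfolding nonzeros_def zero_one_mat_def by blast+
    then show "(case e of (i, j) \<Rightarrow> A i j * ?h (i, j)) = ?h e"
      by simp
  qed simp
  also have "\<dots> = sum (trunc_sq_dist lam) (map_prod y y ` nonzeros n A)"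
    by (simp add: sum.reindex[OF inj_on_map_prod_square[OF y]] comp_def)
  finally show ?thesis .
qed

lemma sum_trunc_sq_dist_off_band:
  assumes "I \<subseteq> {1..n} \<times> {1..n}"
  shows "sum (trunc_sq_dist (real (d^2))) (I - band n d) = real (card (I - band n d)) * real (d^2)"
proof -
  have "trunc_sq_dist (real (d^2)) (i, j) = real (d^2)" if "(i, j) \<in> I - band n d" for i j
  proof -
    have "real d \<le> \<bar>real i - real j\<bar>"
      using that assms by (auto simp: band_def)
    then have "real d ^ 2 \<le> (real i - real j)^2"
      by (metis abs_of_nat power2_abs power_mono of_nat_0_le_iff)
    then show ?thesis
      by (simp add: trunc_sq_dist_def)
  qed
  then show ?thesis
    by (simp add: split_paired_all)
qed

lemma sum_trunc_sq_dist_band_le: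
  assumes I: "I \<subseteq> {1..n} \<times> {1..n}" and card_I: "card I = card (band n d) + s"
  shows "sum (trunc_sq_dist (real (d^2))) (band n d) + real (d^2) * s
           \<le> sum (trunc_sq_dist (real (d^2))) I"
proof -
  let ?h = "trunc_sq_dist (real (d^2))" and ?B = "band n d"
  have fin: "finite I"
    using I by (rule finite_subset) simp
  have card_diff: "card (I - ?B) = card (?B - I) + s"
    using card_Diff_eq_card_Diff_add[OF fin _ card_I] by simp
  have "sum ?h ?B + real (d^2) * s = sum ?h (?B \<inter> I) + sum ?h (?B - I) + real (d^2) * s"
    by (simp add: sum.Int_Diff)
  also have "\<dots> \<le> sum ?h (?B \<inter> I) + real (card (?B - I)) * real (d^2) + real (d^2) * s"
    using sum_bounded_above[of "?B - I" ?h "real (d^2)"] by (simp add: trunc_sq_dist_def split_beta)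
  also have "\<dots> = sum ?h (?B \<inter> I) + sum ?h (I - ?B)"
    using sum_trunc_sq_dist_off_band[OF I] card_diff by (simp add: algebra_simps)
  also have "\<dots> = sum ?h I"
    using sum.Int_Diff[OF fin, of ?h ?B] by (simp add: Int_commute)
  finally show ?thesis .
qed

lemma sum_trunc_sq_dist_band_eq:
  assumes I: "I \<subseteq> {1..n} \<times> {1..n}" and card_I: "card I = card (band n d) + s"
    and band: "band n d \<subseteq> I"
  shows "sum (trunc_sq_dist (real (d^2))) I = sum (trunc_sq_dist (real (d^2))) (band n d) + real (d^2) * s"
proof -
  let ?h = "trunc_sq_dist (real (d^2))" and ?B = "band n d"
  have fin: "finite I"
    using I by (rule finite_subset) simp
  have "card (I - ?B) = s"
    using card_Diff_subset[OF _ band] card_I by simp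
  then show ?thesis
    using sum.subset_diff[OF band fin, of ?h] sum_trunc_sq_dist_off_band[OF I] by (simp add: algebra_simps)
qed

lemma robust_seriation_optimal:
  assumes \<pi>: "\<pi> permutes {1..n}" and B: "perm_conj \<pi> A \<in> M_set n d s" and n: "s + d + 1 \<le> n"
  shows "\<exists>S. strong_R n S \<and>
           (\<forall>\<pi>' S'. \<pi>' permutes {1..n} \<and> strong_R n S' \<longrightarrow>
              l1_dist n S (perm_conj \<pi> A) \<le> l1_dist n S' (perm_conj \<pi>' A))"
proof (intro exI conjI allI impI)
  let ?S = "\<lambda>i j. of_bool (\<bar>int i - int j\<bar> \<le> int d) :: real"
  have B_facts: "zero_one_mat n (perm_conj \<pi> A)" "band n d \<subseteq> nonzeros n (perm_conj \<pi> A)"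
    "card (nonzeros n (perm_conj \<pi> A)) = card (band n d) + s"
    using M_setD[OF B] n by simp_all
  show "strong_R n ?S"
    by (rule strong_R_band_indicator)
  have "l1_dist n ?S (perm_conj \<pi> A) = real s"
    using l1_dist_band_indicator[OF B_facts(1,2)] card_Diff_subset[OF _ B_facts(2)] B_facts(3)
    by simp
  moreover fix \<pi>' S' assume "\<pi>' permutes {1..n} \<and> strong_R n S'"
  then have \<sigma>: "inv \<pi> \<circ> \<pi>' permutes {1..n}" and S': "strong_R n S'"
    using permutes_compose permutes_inv[OF \<pi>] by blast+
  have "perm_conj \<pi>' A = perm_conj (inv \<pi> \<circ> \<pi>') (perm_conj \<pi> A)"
    by (simp add: perm_conj_perm_conj o_assoc permutes_inv_o[OF \<pi>])
  then have "real s \<le> l1_dist n S' (perm_conj \<pi>' A)"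
    using l1_dist_strong_R_ge[OF S' zero_one_mat_perm_conj[OF \<sigma> B_facts(1)] _ n]
      card_nonzeros_perm_conj[OF \<sigma>] B_facts(3) by simp
  ultimately show "l1_dist n ?S (perm_conj \<pi> A) \<le> l1_dist n S' (perm_conj \<pi>' A)"
    by simp
qed

lemma r2sum_optimal:
  assumes \<pi>: "\<pi> permutes {1..n}" and B: "perm_conj \<pi> A \<in> M_set n d s" and "d \<le> n"
    and x: "\<forall>k\<in>{1..n}. x (\<pi> k) = k" and y: "bij_betw y {1..n} {1..n}"
  shows "r2sum n (real (d^2)) A x \<le> r2sum n (real (d^2)) A y"
proof -
  let ?h = "trunc_sq_dist (real (d^2))"
  note B_facts = M_setD[OF B \<open>d \<le> n\<close>]
  have \<pi>': "inv \<pi> permutes {1..n}"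
    using permutes_inv[OF \<pi>] .
  have A_eq: "A = perm_conj (inv \<pi>) (perm_conj \<pi> A)"
    by (rule perm_conj_inv_perm_conj[OF \<pi>, symmetric])
  have A: "zero_one_mat n A"
    using zero_one_mat_perm_conj[OF \<pi>' B_facts(1)] A_eq by simp
  have card_A: "card (nonzeros n A) = card (band n d) + s"
    using card_nonzeros_perm_conj[OF \<pi>, of A] B_facts(3) by simp
  have x_inv: "x i = inv \<pi> i" if "i \<in> {1..n}" for i
    using x permutes_in_image[OF \<pi>'] that by (metis permutes_inverses(1)[OF \<pi>])
  have inj_x: "inj_on x {1..n}"
    using permutes_inj_on[OF \<pi>'] x_inv inj_on_cong by blast
  have "map_prod x x ` nonzeros n A = map_prod (inv \<pi>) (inv \<pi>) ` nonzeros n A"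
    using x_inv by (intro image_cong) (auto simp: nonzeros_def)
  also have "\<dots> = nonzeros n (perm_conj \<pi> A)"
    using nonzeros_perm_conj[OF \<pi>', of "perm_conj \<pi> A"] A_eq by simp
  finally have "r2sum n (real (d^2)) A x = sum ?h (nonzeros n (perm_conj \<pi> A))"
    using r2sum_eq_sum_image[OF inj_x A] by simp
  also have "\<dots> = sum ?h (band n d) + real (d^2) * s"
    using sum_trunc_sq_dist_band_eq[OF nonzeros_subset B_facts(3,2)] .
  also have "\<dots> \<le> sum ?h (map_prod y y ` nonzeros n A)"
  proof (rule sum_trunc_sq_dist_band_le)
    show "map_prod y y ` nonzeros n A \<subseteq> {1..n} \<times> {1..n}"
      using nonzeros_subset bij_betw_imp_surj_on[OF y] by fastforce
    show "card (map_prod y y ` nonzeros n A) = card (band n d) + s"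
      using card_image[OF inj_on_map_prod_square[OF bij_betw_imp_inj_on[OF y]]] card_A by simp
  qed
  also have "\<dots> = r2sum n (real (d^2)) A y"
    using r2sum_eq_sum_image[OF bij_betw_imp_inj_on[OF y] A] by simp
  finally show ?thesis .
qed

theorem proposition1:
  fixes n \<delta> s :: nat and A :: "nat \<Rightarrow> nat \<Rightarrow> real" and \<pi> :: "nat \<Rightarrow> nat"
  assumes "n \<ge> 1"
    and "int s \<le> int n - int \<delta> - 1"
    and "symmetric_mat n A"
    and "\<pi> permutes {1..n}"
    and "perm_conj \<pi> A \<in> M_set n \<delta> s"
  shows "(\<exists>S. strong_R n S \<and>
            (\<forall>\<pi>' S'. \<pi>' permutes {1..n} \<and> strong_R n S' \<longrightarrow>
               l1_dist n S (perm_conj \<pi> A) \<le> l1_dist n S' (perm_conj \<pi>' A)))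
       \<and> (\<forall>x. (\<forall>k\<in>{1..n}. x (\<pi> k) = k) \<longrightarrow>
            (\<forall>y. bij_betw y {1..n} {1..n} \<longrightarrow>
               r2sum n (real (\<delta>^2)) A x \<le> r2sum n (real (\<delta>^2)) A y))"
proof -
  have n: "s + \<delta> + 1 \<le> n"
    using assms(2) by linarith
  then show ?thesis
    using robust_seriation_optimal[OF assms(4,5) n] r2sum_optimal[OF assms(4,5)] by simp
qed

end
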